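(* Let $a,b>0$, $D=[0,a]\times[0,b]$, and let $f:D\to\mathbb{R}$ be a $C^3$ function. Let $p\in\operatorname{int}D$ be a local minimum of $f$ at which the Hessian of $f$ is positive definite. Then there exist a neighborhood $U$ of $p$ and a number $r>0$ such that for every sufficiently large $n$ for which $D_n$ is nondegenerate, there is exactly one grid vertex $p_{i,j}$ of $D_n$ in $U$ which is minimal within its grid circle $C_r(p_{i,j})$.
   Context: For $n\ge1$, $D_n$ denotes the division of $D$ into $n\times n$ congruent rectangles; its grid vertices are the points $p_{i,j}=\left(\frac{i}{n}a,\frac{j}{n}b\right)$, $0\le i,j\le n$. $D_n$ is called nondegenerate if $f(p)\neq f(p')$ for any two distinct grid vertices $p\neq p'$ of $D_n$. The grid circle of centre $p_{i,j}$ and radius $r$ is $C_r(p_{i,j})=\{p_{l,m}: 0\le l,m\le n,\ \max\{|l-i|,|m-j|\}\le r\}$. A grid vertex $p_{i,j}$ is minimal (resp. maximal) within $C_r(p_{i,j})$ if $f(p_{i,j})\le f(q)$ (resp. $f(p_{i,j})\ge f(q)$) for every $q\in C_r(p_{i,j})$. *)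

theory Defs
  imports "HOL-Analysis.Analysis"
begin

definition partial1 :: "(real \<times> real \<Rightarrow> real) \<Rightarrow> real \<times> real \<Rightarrow> real" where
  "partial1 f z = deriv (\<lambda>t. f (t, snd z)) (fst z)"

definition partial2 :: "(real \<times> real \<Rightarrow> real) \<Rightarrow> real \<times> real \<Rightarrow> real" where
  "partial2 f z = deriv (\<lambda>t. f (fst z, t)) (snd z)"

fun Ck_on :: "nat \<Rightarrow> (real \<times> real) set \<Rightarrow> (real \<times> real \<Rightarrow> real) \<Rightarrow> bool" where
  "Ck_on 0 S f = continuous_on S f"
| "Ck_on (Suc k) S f =
     (continuous_on S f \<and>
      (\<forall>z\<in>S. (\<lambda>t. f (t, snd z)) differentiable (at (fst z)) \<and>
              (\<lambda>t. f (fst z, t)) differentiable (at (snd z))) \<and>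
      Ck_on k S (partial1 f) \<and> Ck_on k S (partial2 f))"

definition hessian_pos_def :: "(real \<times> real \<Rightarrow> real) \<Rightarrow> real \<times> real \<Rightarrow> bool" where
  "hessian_pos_def f z \<longleftrightarrow>
     (\<forall>u v. (u, v) \<noteq> (0, 0) \<longrightarrow>
        u * u * partial1 (partial1 f) z + u * v * partial2 (partial1 f) z
        + v * u * partial1 (partial2 f) z + v * v * partial2 (partial2 f) z > 0)"

definition grid_vertex :: "real \<Rightarrow> real \<Rightarrow> nat \<Rightarrow> nat \<Rightarrow> nat \<Rightarrow> real \<times> real" where
  "grid_vertex a b n i j = (real i / real n * a, real j / real n * b)"

definition nondegenerate :: "(real \<times> real \<Rightarrow> real) \<Rightarrow> real \<Rightarrow> real \<Rightarrow> nat \<Rightarrow> bool" where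
  "nondegenerate f a b n \<longleftrightarrow>
     (\<forall>i j l m. i \<le> n \<and> j \<le> n \<and> l \<le> n \<and> m \<le> n \<and>
        grid_vertex a b n i j \<noteq> grid_vertex a b n l m \<longrightarrow>
        f (grid_vertex a b n i j) \<noteq> f (grid_vertex a b n l m))"

definition grid_circle :: "real \<Rightarrow> real \<Rightarrow> nat \<Rightarrow> real \<Rightarrow> nat \<Rightarrow> nat \<Rightarrow> (real \<times> real) set" where
  "grid_circle a b n r i j =
     {grid_vertex a b n l m | l m. l \<le> n \<and> m \<le> n \<and>
        real_of_int (max \<bar>int l - int i\<bar> \<bar>int m - int j\<bar>) \<le> r}"

definition minimal_in_circle ::
  "(real \<times> real \<Rightarrow> real) \<Rightarrow> real \<Rightarrow> real \<Rightarrow> nat \<Rightarrow> real \<Rightarrow> nat \<Rightarrow> nat \<Rightarrow> bool" where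
  "minimal_in_circle f a b n r i j \<longleftrightarrow>
     (\<forall>q\<in>grid_circle a b n r i j. f (grid_vertex a b n i j) \<le> f q)"

end

theory Submission
  imports Defs
begin

(*
  Near p the gradient g of f is strongly monotone, g(x) \<cdot> (x - p) \<ge> \<mu> |x - p|\<^sup>2, and the
  first-order Taylor remainder is O(|y - x|\<^sup>2). So from any grid vertex farther than C h
  from p, a step of length of order h towards p followed by rounding to the grid reaches a
  vertex within r grid steps having a strictly smaller value. Consequently a vertex that is
  minimal in its grid circle of radius r lies within C h of p; two such vertices lie in each
  other's circles, hence have equal values and coincide by nondegeneracy. For existence,
  take a minimiser of f over the grid vertices in a square of half the size around p.
*)

section \<open>Partial derivatives and first-order estimates\<close>

lemma Ck_on_Suc_imp_Ck_on: "Ck_on (Suc k) S f \<Longrightarrow> Ck_on k S f"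
proof (induction k arbitrary: f)
  case 0
  then show ?case by simp
next
  case (Suc k)
  then show ?case by (metis Ck_on.simps(2))
qed

lemma Ck_on_imp_continuous_on: "Ck_on k S f \<Longrightarrow> continuous_on S f"
  by (cases k) auto

definition has_partials_on ::
  "(real \<times> real \<Rightarrow> real) \<Rightarrow> (real \<times> real \<Rightarrow> real) \<Rightarrow> (real \<times> real \<Rightarrow> real) \<Rightarrow> (real \<times> real) set \<Rightarrow> bool"
  where "has_partials_on u D1 D2 S \<longleftrightarrow>
    (\<forall>(s, t)\<in>S. ((\<lambda>\<tau>. u (\<tau>, t)) has_real_derivative D1 (s, t)) (at s) \<and>
                ((\<lambda>\<tau>. u (s, \<tau>)) has_real_derivative D2 (s, t)) (at t))"

lemma has_partials_on_subset: "has_partials_on u D1 D2 S \<Longrightarrow> T \<subseteq> S \<Longrightarrow> has_partials_on u D1 D2 T"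
  unfolding has_partials_on_def by blast

lemma Ck_on_Suc_imp_has_partials_on: "Ck_on (Suc k) S f \<Longrightarrow> has_partials_on f (partial1 f) (partial2 f) S"
  by (auto simp: has_partials_on_def partial1_def partial2_def DERIV_deriv_iff_real_differentiable)

definition square :: "real \<times> real \<Rightarrow> real \<Rightarrow> (real \<times> real) set" where
  "square p \<delta> = {fst p - \<delta><..<fst p + \<delta>} \<times> {snd p - \<delta><..<snd p + \<delta>}"

lemma mem_square [simp]: "(x1, x2) \<in> square (p1, p2) \<delta> \<longleftrightarrow> \<bar>x1 - p1\<bar> < \<delta> \<and> \<bar>x2 - p2\<bar> < \<delta>"
  by (auto simp: square_def abs_less_iff)

lemma open_square: "open (square p \<delta>)"
  by (simp add: square_def open_Times)

lemma rectangle_subset_square: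
  assumes "(x1, x2) \<in> square p \<delta>" "(y1, y2) \<in> square p \<delta>"
  shows "{min x1 y1..max x1 y1} \<times> {min x2 y2..max x2 y2} \<subseteq> square p \<delta>"
  using assms by (cases p) (auto simp: abs_less_iff)

lemma dist_pair_le_sum_abs: "dist (s, t) (p1, p2) \<le> \<bar>s - p1\<bar> + \<bar>t - p2\<bar>"
  by (simp add: dist_Pair_Pair dist_real_def sqrt_sum_squares_le_sum_abs)

lemma eventually_nhds_square:
  assumes "eventually P (nhds p)"
  shows "\<exists>\<delta>>0. \<forall>z\<in>square p \<delta>. P z"
proof -
  obtain d where "d > 0" and d: "\<And>z. dist z p < d \<Longrightarrow> P z"
    using assms unfolding eventually_nhds_metric by blast
  have "P (s, t)" if "(s, t) \<in> square p (d/2)" for s t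
  proof -
    obtain p1 p2 where p: "p = (p1, p2)" by (cases p)
    have "dist (s, t) p < d"
      using that dist_pair_le_sum_abs[of s t p1 p2] unfolding p by simp
    then show ?thesis by (rule d)
  qed
  with \<open>d > 0\<close> show ?thesis by (intro exI[of _ "d/2"]) auto
qed

lemma affine_approximation_bound:
  fixes \<phi> \<phi>' :: "real \<Rightarrow> real"
  assumes der: "\<And>t. t \<in> {min x y..max x y} \<Longrightarrow> (\<phi> has_real_derivative \<phi>' t) (at t)"
    and bnd: "\<And>t. t \<in> {min x y..max x y} \<Longrightarrow> \<bar>\<phi>' t - c\<bar> \<le> e"
  shows "\<bar>\<phi> y - \<phi> x - c * (y - x)\<bar> \<le> e * \<bar>y - x\<bar>"
proof -
  have "((\<lambda>t. \<phi> t - c * t) has_real_derivative \<phi>' t - c) (at t within {min x y..max x y})"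
    if "t \<in> {min x y..max x y}" for t
    by (rule has_field_derivative_at_within, intro DERIV_diff der[OF that] DERIV_cmult_Id)
  then have "norm ((\<phi> y - c * y) - (\<phi> x - c * x)) \<le> e * norm (y - x)"
    by (rule field_differentiable_bound[OF convex_real_interval(5)]) (simp_all add: bnd)
  then show ?thesis by (simp add: algebra_simps)
qed

lemma affine_approximation_bound_rectangle:
  fixes u D1 D2 :: "real \<times> real \<Rightarrow> real" and x1 x2 y1 y2 :: real
  defines "R \<equiv> {min x1 y1..max x1 y1} \<times> {min x2 y2..max x2 y2}"
  assumes "has_partials_on u D1 D2 R"
    and "\<And>z. z \<in> R \<Longrightarrow> \<bar>D1 z - c1\<bar> \<le> e1"
    and "\<And>z. z \<in> R \<Longrightarrow> \<bar>D2 z - c2\<bar> \<le> e2"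
  shows "\<bar>u (y1, y2) - u (x1, x2) - c1 * (y1 - x1) - c2 * (y2 - x2)\<bar> \<le> e1 * \<bar>y1 - x1\<bar> + e2 * \<bar>y2 - x2\<bar>"
proof -
  have "\<bar>u (y1, x2) - u (x1, x2) - c1 * (y1 - x1)\<bar> \<le> e1 * \<bar>y1 - x1\<bar>"
    using assms by (intro affine_approximation_bound[where \<phi>' = "\<lambda>s. D1 (s, x2)"])
      (auto simp: has_partials_on_def)
  moreover have "\<bar>u (y1, y2) - u (y1, x2) - c2 * (y2 - x2)\<bar> \<le> e2 * \<bar>y2 - x2\<bar>"
    using assms by (intro affine_approximation_bound[where \<phi>' = "\<lambda>t. D2 (y1, t)"])
      (auto simp: has_partials_on_def)
  ultimately show ?thesis by linarith
qed

lemma affine_approximation_bound_square: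
  fixes u D1 D2 :: "real \<times> real \<Rightarrow> real"
  assumes "has_partials_on u D1 D2 (square p \<delta>)"
    and "\<And>z. z \<in> square p \<delta> \<Longrightarrow> \<bar>D1 z - c1\<bar> \<le> e"
    and "\<And>z. z \<in> square p \<delta> \<Longrightarrow> \<bar>D2 z - c2\<bar> \<le> e"
    and "(x1, x2) \<in> square p \<delta>" "(y1, y2) \<in> square p \<delta>"
  shows "\<bar>u (y1, y2) - u (x1, x2) - c1 * (y1 - x1) - c2 * (y2 - x2)\<bar> \<le> e * (\<bar>y1 - x1\<bar> + \<bar>y2 - x2\<bar>)"
proof -
  have R: "{min x1 y1..max x1 y1} \<times> {min x2 y2..max x2 y2} \<subseteq> square p \<delta>"
    using assms(4,5) by (rule rectangle_subset_square)
  have "\<bar>u (y1, y2) - u (x1, x2) - c1 * (y1 - x1) - c2 * (y2 - x2)\<bar> \<le> e * \<bar>y1 - x1\<bar> + e * \<bar>y2 - x2\<bar>"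
    by (rule affine_approximation_bound_rectangle[OF has_partials_on_subset[OF assms(1) R]])
      (use R assms(2,3) in blast)+
  then show ?thesis by (simp add: distrib_left)
qed

section \<open>A nondegenerate minimum is a quadratic well\<close>

lemma partials_zero_at_local_min:
  assumes "has_partials_on f D1 D2 S" "(p1, p2) \<in> S"
    and "\<forall>\<^sub>F q in nhds (p1, p2). f (p1, p2) \<le> f q"
  shows "D1 (p1, p2) = 0" "D2 (p1, p2) = 0"
proof -
  obtain \<delta> where "\<delta> > 0" and min: "\<And>z. z \<in> square (p1, p2) \<delta> \<Longrightarrow> f (p1, p2) \<le> f z"
    using eventually_nhds_square[OF assms(3)] by blast
  have "((\<lambda>\<tau>. f (\<tau>, p2)) has_real_derivative D1 (p1, p2)) (at p1)"
    "((\<lambda>\<tau>. f (p1, \<tau>)) has_real_derivative D2 (p1, p2)) (at p2)"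
    using assms(1,2) unfolding has_partials_on_def by auto
  moreover have "\<forall>y. \<bar>p1 - y\<bar> < \<delta> \<longrightarrow> f (p1, p2) \<le> f (y, p2)"
    "\<forall>y. \<bar>p2 - y\<bar> < \<delta> \<longrightarrow> f (p1, p2) \<le> f (p1, y)"
    using min \<open>\<delta> > 0\<close> by (simp_all add: abs_minus_commute)
  ultimately show "D1 (p1, p2) = 0" "D2 (p1, p2) = 0"
    using DERIV_local_min[OF _ \<open>\<delta> > 0\<close>] by blast+
qed

lemma positive_definite_form_coercive:
  fixes A B C D :: real
  assumes pd: "\<forall>u v. (u, v) \<noteq> (0, 0) \<longrightarrow> u * u * A + u * v * B + v * u * C + v * v * D > 0"
  shows "\<exists>m>0. \<forall>w1 w2. m * (\<bar>w1\<bar> + \<bar>w2\<bar>)\<^sup>2 \<le> A * w1\<^sup>2 + (B + C) * w1 * w2 + D * w2\<^sup>2"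
proof -
  have "A > 0" using pd[rule_format, of 1 0] by simp
  have "D > 0" using pd[rule_format, of 0 1] by simp
  define det where "det = A * D - (B + C)\<^sup>2 / 4"
  have "0 < A * (4 * A * D - (B + C)\<^sup>2)"
    using pd[rule_format, of "- (B + C)" "2 * A"] \<open>A > 0\<close>
    by (simp add: algebra_simps power2_eq_square)
  then have "det > 0"
    using \<open>A > 0\<close> by (simp add: det_def zero_less_mult_iff)
  define m where "m = det / (2 * (A + D))"
  have "A + D > 0" using \<open>A > 0\<close> \<open>D > 0\<close> by simp
  have "m * (\<bar>w1\<bar> + \<bar>w2\<bar>)\<^sup>2 \<le> A * w1\<^sup>2 + (B + C) * w1 * w2 + D * w2\<^sup>2" for w1 w2
  proof -
    have "(\<bar>w1\<bar> + \<bar>w2\<bar>)\<^sup>2 \<le> 2 * (w1\<^sup>2 + w2\<^sup>2)"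
      using zero_le_power2[of "\<bar>w1\<bar> - \<bar>w2\<bar>"] by (simp add: power2_eq_square algebra_simps)
    then have "det / 2 * (\<bar>w1\<bar> + \<bar>w2\<bar>)\<^sup>2 \<le> det * (w1\<^sup>2 + w2\<^sup>2)"
      using \<open>det > 0\<close> by simp
    moreover have "(A + D) * (m * (\<bar>w1\<bar> + \<bar>w2\<bar>)\<^sup>2) = det / 2 * (\<bar>w1\<bar> + \<bar>w2\<bar>)\<^sup>2"
      using \<open>A + D > 0\<close> by (simp add: m_def field_simps)
    ultimately have "(A + D) * (m * (\<bar>w1\<bar> + \<bar>w2\<bar>)\<^sup>2) \<le> det * (w1\<^sup>2 + w2\<^sup>2)"
      by linarith
    also have "\<dots> \<le> det * (w1\<^sup>2 + w2\<^sup>2) + (A * w1 + (B + C) * w2 / 2)\<^sup>2 + (D * w2 + (B + C) * w1 / 2)\<^sup>2"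
      by simp
    also have "\<dots> = (A + D) * (A * w1\<^sup>2 + (B + C) * w1 * w2 + D * w2\<^sup>2)"
      by (simp add: det_def field_simps power2_eq_square)
    finally show ?thesis
      using \<open>A + D > 0\<close> by (simp add: mult_le_cancel_left_pos)
  qed
  moreover have "m > 0"
    using \<open>det > 0\<close> \<open>A + D > 0\<close> by (simp add: m_def)
  ultimately show ?thesis by blast
qed

lemma eventually_close_at_continuity_point:
  fixes h :: "real \<times> real \<Rightarrow> real"
  assumes "continuous_on S h" "open S" "p \<in> S" "\<epsilon> > 0"
  shows "\<forall>\<^sub>F z in nhds p. \<bar>h z - h p\<bar> < \<epsilon>"
proof -
  have "(h \<longlongrightarrow> h p) (nhds p)"
    using assms(1-3) continuous_on_eq_continuous_at[of S h]
    by (simp add: isCont_def tendsto_at_iff_tendsto_nhds)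
  from tendstoD[OF this \<open>\<epsilon> > 0\<close>] show ?thesis by (simp add: dist_real_def)
qed

lemma taylor_bound_of_bounded_second_partials:
  assumes f: "has_partials_on f g1 g2 (square p \<delta>)"
    and g1: "has_partials_on g1 A B (square p \<delta>)" and g2: "has_partials_on g2 C D (square p \<delta>)"
    and bnd: "\<And>z. z \<in> square p \<delta> \<Longrightarrow> \<bar>A z\<bar> \<le> M \<and> \<bar>B z\<bar> \<le> M \<and> \<bar>C z\<bar> \<le> M \<and> \<bar>D z\<bar> \<le> M"
    and x: "(x1, x2) \<in> square p \<delta>" and y: "(y1, y2) \<in> square p \<delta>"
  shows "\<bar>f (y1, y2) - f (x1, x2) - g1 (x1, x2) * (y1 - x1) - g2 (x1, x2) * (y2 - x2)\<bar>
           \<le> M * (\<bar>y1 - x1\<bar> + \<bar>y2 - x2\<bar>)\<^sup>2"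
proof -
  define N where "N = \<bar>y1 - x1\<bar> + \<bar>y2 - x2\<bar>"
  define R where "R = {min x1 y1..max x1 y1} \<times> {min x2 y2..max x2 y2}"
  have R: "R \<subseteq> square p \<delta>" unfolding R_def using x y by (rule rectangle_subset_square)
  have "M \<ge> 0" using bnd[OF x] by linarith
  have gradient_variation: "\<bar>g1 z - g1 (x1, x2)\<bar> \<le> M * N \<and> \<bar>g2 z - g2 (x1, x2)\<bar> \<le> M * N"
    if "z \<in> R" for z
  proof -
    obtain s t where z: "z = (s, t)" by (cases z)
    have st: "(s, t) \<in> square p \<delta>" using that R unfolding z by blast
    have "\<bar>s - x1\<bar> \<le> \<bar>y1 - x1\<bar>" "\<bar>t - x2\<bar> \<le> \<bar>y2 - x2\<bar>"
      using that unfolding z R_def by auto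
    then have "M * (\<bar>s - x1\<bar> + \<bar>t - x2\<bar>) \<le> M * N"
      unfolding N_def using \<open>M \<ge> 0\<close> by (intro mult_left_mono) auto
    moreover have "\<bar>g1 (s, t) - g1 (x1, x2) - 0 * (s - x1) - 0 * (t - x2)\<bar> \<le> M * (\<bar>s - x1\<bar> + \<bar>t - x2\<bar>)"
      by (rule affine_approximation_bound_square[OF g1 _ _ x st]) (simp_all add: bnd)
    moreover have "\<bar>g2 (s, t) - g2 (x1, x2) - 0 * (s - x1) - 0 * (t - x2)\<bar> \<le> M * (\<bar>s - x1\<bar> + \<bar>t - x2\<bar>)"
      by (rule affine_approximation_bound_square[OF g2 _ _ x st]) (simp_all add: bnd)
    ultimately show ?thesis unfolding z by simp
  qed
  have "\<bar>f (y1, y2) - f (x1, x2) - g1 (x1, x2) * (y1 - x1) - g2 (x1, x2) * (y2 - x2)\<bar>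
      \<le> M * N * \<bar>y1 - x1\<bar> + M * N * \<bar>y2 - x2\<bar>"
    using has_partials_on_subset[OF f R] gradient_variation unfolding R_def
    by (intro affine_approximation_bound_rectangle) blast+
  also have "\<dots> = M * N\<^sup>2" by (simp add: N_def power2_eq_square algebra_simps)
  finally show ?thesis unfolding N_def .
qed

lemma perturbed_coercive_form:
  fixes A B C D G1 G2 w1 w2 m \<epsilon> :: real
  assumes coercive: "m * (\<bar>w1\<bar> + \<bar>w2\<bar>)\<^sup>2 \<le> A * w1\<^sup>2 + (B + C) * w1 * w2 + D * w2\<^sup>2"
    and G1: "\<bar>G1 - A * w1 - B * w2\<bar> \<le> \<epsilon> * (\<bar>w1\<bar> + \<bar>w2\<bar>)"
    and G2: "\<bar>G2 - C * w1 - D * w2\<bar> \<le> \<epsilon> * (\<bar>w1\<bar> + \<bar>w2\<bar>)"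
  shows "(m - \<epsilon>) * (\<bar>w1\<bar> + \<bar>w2\<bar>)\<^sup>2 \<le> G1 * w1 + G2 * w2"
proof -
  define N where "N = \<bar>w1\<bar> + \<bar>w2\<bar>"
  have "\<bar>(G1 - A * w1 - B * w2) * w1\<bar> \<le> \<epsilon> * N * \<bar>w1\<bar>"
    unfolding abs_mult N_def by (rule mult_right_mono[OF G1]) simp
  moreover have "\<bar>(G2 - C * w1 - D * w2) * w2\<bar> \<le> \<epsilon> * N * \<bar>w2\<bar>"
    unfolding abs_mult N_def by (rule mult_right_mono[OF G2]) simp
  moreover have "\<epsilon> * N * \<bar>w1\<bar> + \<epsilon> * N * \<bar>w2\<bar> = \<epsilon> * N\<^sup>2"
    by (simp add: N_def power2_eq_square algebra_simps)
  moreover have "G1 * w1 + G2 * w2 = (A * w1\<^sup>2 + (B + C) * w1 * w2 + D * w2\<^sup>2)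
      + (G1 - A * w1 - B * w2) * w1 + (G2 - C * w1 - D * w2) * w2"
    by (simp add: power2_eq_square algebra_simps)
  ultimately show ?thesis
    using coercive unfolding N_def[symmetric] by (simp add: algebra_simps abs_le_iff)
qed

lemma perturbed_linear_form_bound:
  fixes A B G w1 w2 \<epsilon> K :: real
  assumes G: "\<bar>G - A * w1 - B * w2\<bar> \<le> \<epsilon> * (\<bar>w1\<bar> + \<bar>w2\<bar>)" and K: "\<bar>A\<bar> + \<bar>B\<bar> + \<epsilon> \<le> K"
  shows "\<bar>G\<bar> \<le> K * (\<bar>w1\<bar> + \<bar>w2\<bar>)"
proof -
  have "\<bar>A * w1 + B * w2\<bar> \<le> \<bar>A\<bar> * \<bar>w1\<bar> + \<bar>B\<bar> * \<bar>w2\<bar>"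
    by (metis abs_mult abs_triangle_ineq)
  also have "\<dots> \<le> (\<bar>A\<bar> + \<bar>B\<bar>) * (\<bar>w1\<bar> + \<bar>w2\<bar>)"
    by (simp add: algebra_simps)
  finally have "\<bar>G\<bar> \<le> (\<bar>A\<bar> + \<bar>B\<bar> + \<epsilon>) * (\<bar>w1\<bar> + \<bar>w2\<bar>)"
    using G by (simp add: algebra_simps abs_le_iff)
  also have "\<dots> \<le> K * (\<bar>w1\<bar> + \<bar>w2\<bar>)"
    using K by (intro mult_right_mono) auto
  finally show ?thesis .
qed

locale quadratic_well =
  fixes f g1 g2 :: "real \<times> real \<Rightarrow> real" and p1 p2 \<delta> \<mu> M :: real
  assumes \<delta>_pos: "\<delta> > 0" and \<mu>_pos: "\<mu> > 0" and M_nonneg: "M \<ge> 0"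
    and taylor_bound: "\<And>x1 x2 y1 y2. (x1, x2) \<in> square (p1, p2) \<delta> \<Longrightarrow> (y1, y2) \<in> square (p1, p2) \<delta> \<Longrightarrow>
      \<bar>f (y1, y2) - f (x1, x2) - g1 (x1, x2) * (y1 - x1) - g2 (x1, x2) * (y2 - x2)\<bar>
        \<le> M * (\<bar>y1 - x1\<bar> + \<bar>y2 - x2\<bar>)\<^sup>2"
    and gradient_coercive: "\<And>x1 x2. (x1, x2) \<in> square (p1, p2) \<delta> \<Longrightarrow>
      \<mu> * (\<bar>x1 - p1\<bar> + \<bar>x2 - p2\<bar>)\<^sup>2 \<le> g1 (x1, x2) * (x1 - p1) + g2 (x1, x2) * (x2 - p2)"
    and gradient_bound: "\<And>x1 x2. (x1, x2) \<in> square (p1, p2) \<delta> \<Longrightarrow>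
      \<bar>g1 (x1, x2)\<bar> \<le> M * (\<bar>x1 - p1\<bar> + \<bar>x2 - p2\<bar>) \<and> \<bar>g2 (x1, x2)\<bar> \<le> M * (\<bar>x1 - p1\<bar> + \<bar>x2 - p2\<bar>)"

lemma quadratic_well_of_second_partials:
  fixes A B C D :: "real \<times> real \<Rightarrow> real" and p1 p2 :: real
  defines "M \<equiv> \<bar>A (p1, p2)\<bar> + \<bar>B (p1, p2)\<bar> + \<bar>C (p1, p2)\<bar> + \<bar>D (p1, p2)\<bar> + 1"
  assumes "\<delta> > 0" "\<epsilon> \<le> 1" "\<epsilon> < m"
    and df: "has_partials_on f g1 g2 (square (p1, p2) \<delta>)"
    and dg: "has_partials_on g1 A B (square (p1, p2) \<delta>)" "has_partials_on g2 C D (square (p1, p2) \<delta>)"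
    and grad0: "g1 (p1, p2) = 0" "g2 (p1, p2) = 0"
    and coercive: "\<And>w1 w2. m * (\<bar>w1\<bar> + \<bar>w2\<bar>)\<^sup>2
      \<le> A (p1, p2) * w1\<^sup>2 + (B (p1, p2) + C (p1, p2)) * w1 * w2 + D (p1, p2) * w2\<^sup>2"
    and near: "\<And>z. z \<in> square (p1, p2) \<delta> \<Longrightarrow> \<bar>A z - A (p1, p2)\<bar> \<le> \<epsilon> \<and> \<bar>B z - B (p1, p2)\<bar> \<le> \<epsilon> \<and>
      \<bar>C z - C (p1, p2)\<bar> \<le> \<epsilon> \<and> \<bar>D z - D (p1, p2)\<bar> \<le> \<epsilon>"
  shows "quadratic_well f g1 g2 p1 p2 \<delta> (m - \<epsilon>) M"
proof -
  have p: "(p1, p2) \<in> square (p1, p2) \<delta>" using \<open>\<delta> > 0\<close> by simp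
  have lin: "\<bar>g1 (x1, x2) - A (p1, p2) * (x1 - p1) - B (p1, p2) * (x2 - p2)\<bar> \<le> \<epsilon> * (\<bar>x1 - p1\<bar> + \<bar>x2 - p2\<bar>)"
    "\<bar>g2 (x1, x2) - C (p1, p2) * (x1 - p1) - D (p1, p2) * (x2 - p2)\<bar> \<le> \<epsilon> * (\<bar>x1 - p1\<bar> + \<bar>x2 - p2\<bar>)"
    if x: "(x1, x2) \<in> square (p1, p2) \<delta>" for x1 x2
  proof -
    have "\<bar>g1 (x1, x2) - g1 (p1, p2) - A (p1, p2) * (x1 - p1) - B (p1, p2) * (x2 - p2)\<bar>
        \<le> \<epsilon> * (\<bar>x1 - p1\<bar> + \<bar>x2 - p2\<bar>)"
      by (rule affine_approximation_bound_square[OF dg(1) _ _ p x]) (simp_all add: near)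
    moreover have "\<bar>g2 (x1, x2) - g2 (p1, p2) - C (p1, p2) * (x1 - p1) - D (p1, p2) * (x2 - p2)\<bar>
        \<le> \<epsilon> * (\<bar>x1 - p1\<bar> + \<bar>x2 - p2\<bar>)"
      by (rule affine_approximation_bound_square[OF dg(2) _ _ p x]) (simp_all add: near)
    ultimately show "\<bar>g1 (x1, x2) - A (p1, p2) * (x1 - p1) - B (p1, p2) * (x2 - p2)\<bar> \<le> \<epsilon> * (\<bar>x1 - p1\<bar> + \<bar>x2 - p2\<bar>)"
      "\<bar>g2 (x1, x2) - C (p1, p2) * (x1 - p1) - D (p1, p2) * (x2 - p2)\<bar> \<le> \<epsilon> * (\<bar>x1 - p1\<bar> + \<bar>x2 - p2\<bar>)"
      using grad0 by simp_all
  qed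
  have bounded: "\<bar>A z\<bar> \<le> M \<and> \<bar>B z\<bar> \<le> M \<and> \<bar>C z\<bar> \<le> M \<and> \<bar>D z\<bar> \<le> M"
    if "z \<in> square (p1, p2) \<delta>" for z
    using near[OF that] \<open>\<epsilon> \<le> 1\<close> unfolding M_def by (smt (verit))
  show ?thesis
  proof
    show "\<delta> > 0" by fact
    show "m - \<epsilon> > 0" "M \<ge> 0" using \<open>\<epsilon> < m\<close> by (simp_all add: M_def)
  next
    fix x1 x2 y1 y2 assume xy: "(x1, x2) \<in> square (p1, p2) \<delta>" "(y1, y2) \<in> square (p1, p2) \<delta>"
    show "\<bar>f (y1, y2) - f (x1, x2) - g1 (x1, x2) * (y1 - x1) - g2 (x1, x2) * (y2 - x2)\<bar>
      \<le> M * (\<bar>y1 - x1\<bar> + \<bar>y2 - x2\<bar>)\<^sup>2"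
      by (rule taylor_bound_of_bounded_second_partials[OF df dg]) (use bounded xy in simp_all)
  next
    fix x1 x2 assume x: "(x1, x2) \<in> square (p1, p2) \<delta>"
    show "(m - \<epsilon>) * (\<bar>x1 - p1\<bar> + \<bar>x2 - p2\<bar>)\<^sup>2 \<le> g1 (x1, x2) * (x1 - p1) + g2 (x1, x2) * (x2 - p2)"
      using coercive lin[OF x] by (rule perturbed_coercive_form)
    have "\<bar>A (p1, p2)\<bar> + \<bar>B (p1, p2)\<bar> + \<epsilon> \<le> M" "\<bar>C (p1, p2)\<bar> + \<bar>D (p1, p2)\<bar> + \<epsilon> \<le> M"
      using \<open>\<epsilon> \<le> 1\<close> by (simp_all add: M_def)
    with lin[OF x] show "\<bar>g1 (x1, x2)\<bar> \<le> M * (\<bar>x1 - p1\<bar> + \<bar>x2 - p2\<bar>) \<and> \<bar>g2 (x1, x2)\<bar> \<le> M * (\<bar>x1 - p1\<bar> + \<bar>x2 - p2\<bar>)"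
      by (blast intro: perturbed_linear_form_bound)
  qed
qed

lemma C2_nondegenerate_local_min_quadratic_well:
  assumes "open S" "(p1, p2) \<in> S" "Ck_on 2 S f"
    and local_min: "\<forall>\<^sub>F q in nhds (p1, p2). f (p1, p2) \<le> f q"
    and "hessian_pos_def f (p1, p2)"
  shows "\<exists>\<delta> \<mu> M. square (p1, p2) \<delta> \<subseteq> S \<and> quadratic_well f (partial1 f) (partial2 f) p1 p2 \<delta> \<mu> M"
proof -
  define g1 where "g1 = partial1 f"
  define g2 where "g2 = partial2 f"
  define A where "A = partial1 g1"
  define B where "B = partial2 g1"
  define C where "C = partial1 g2"
  define D where "D = partial2 g2"
  have C2: "Ck_on (Suc (Suc 0)) S f" using \<open>Ck_on 2 S f\<close> by (simp add: numeral_2_eq_2)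
  then have Cg: "Ck_on (Suc 0) S g1" "Ck_on (Suc 0) S g2"
    unfolding g1_def g2_def by (metis Ck_on.simps(2))+
  have df: "has_partials_on f g1 g2 S"
    unfolding g1_def g2_def by (rule Ck_on_Suc_imp_has_partials_on[OF C2])
  have dg: "has_partials_on g1 A B S" "has_partials_on g2 C D S"
    unfolding A_def B_def C_def D_def by (rule Ck_on_Suc_imp_has_partials_on, fact Cg)+
  have cont: "continuous_on S A" "continuous_on S B" "continuous_on S C" "continuous_on S D"
    using Cg unfolding A_def B_def C_def D_def by (auto intro: Ck_on_imp_continuous_on)
  obtain m where "m > 0" and coercive: "\<And>w1 w2. m * (\<bar>w1\<bar> + \<bar>w2\<bar>)\<^sup>2
      \<le> A (p1, p2) * w1\<^sup>2 + (B (p1, p2) + C (p1, p2)) * w1 * w2 + D (p1, p2) * w2\<^sup>2"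
    using positive_definite_form_coercive \<open>hessian_pos_def f (p1, p2)\<close>
    unfolding hessian_pos_def_def A_def B_def C_def D_def g1_def g2_def by blast
  define \<epsilon> where "\<epsilon> = min 1 (m / 2)"
  have "\<epsilon> > 0" "\<epsilon> \<le> 1" "\<epsilon> < m" using \<open>m > 0\<close> by (auto simp: \<epsilon>_def)
  have "\<forall>\<^sub>F z in nhds (p1, p2). z \<in> S \<and> \<bar>A z - A (p1, p2)\<bar> < \<epsilon> \<and> \<bar>B z - B (p1, p2)\<bar> < \<epsilon> \<and>
      \<bar>C z - C (p1, p2)\<bar> < \<epsilon> \<and> \<bar>D z - D (p1, p2)\<bar> < \<epsilon>"
    using \<open>open S\<close> \<open>(p1, p2) \<in> S\<close> \<open>\<epsilon> > 0\<close>
    by (intro eventually_conj eventually_nhds_in_open eventually_close_at_continuity_point[OF cont(1)]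
        eventually_close_at_continuity_point[OF cont(2)] eventually_close_at_continuity_point[OF cont(3)]
        eventually_close_at_continuity_point[OF cont(4)])
  then obtain \<delta> where "\<delta> > 0" and near: "\<And>z. z \<in> square (p1, p2) \<delta> \<Longrightarrow> z \<in> S \<and>
      \<bar>A z - A (p1, p2)\<bar> < \<epsilon> \<and> \<bar>B z - B (p1, p2)\<bar> < \<epsilon> \<and> \<bar>C z - C (p1, p2)\<bar> < \<epsilon> \<and> \<bar>D z - D (p1, p2)\<bar> < \<epsilon>"
    using eventually_nhds_square by blast
  then have sub: "square (p1, p2) \<delta> \<subseteq> S" by blast
  have "quadratic_well f g1 g2 p1 p2 \<delta> (m - \<epsilon>) (\<bar>A (p1, p2)\<bar> + \<bar>B (p1, p2)\<bar> + \<bar>C (p1, p2)\<bar> + \<bar>D (p1, p2)\<bar> + 1)"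
  proof (rule quadratic_well_of_second_partials)
    show "has_partials_on f g1 g2 (square (p1, p2) \<delta>)"
      "has_partials_on g1 A B (square (p1, p2) \<delta>)" "has_partials_on g2 C D (square (p1, p2) \<delta>)"
      using df dg sub by (blast intro: has_partials_on_subset)+
    show "g1 (p1, p2) = 0" "g2 (p1, p2) = 0"
      using partials_zero_at_local_min[OF df \<open>(p1, p2) \<in> S\<close> local_min] by auto
    show "m * (\<bar>w1\<bar> + \<bar>w2\<bar>)\<^sup>2 \<le> A (p1, p2) * w1\<^sup>2 + (B (p1, p2) + C (p1, p2)) * w1 * w2 + D (p1, p2) * w2\<^sup>2"
      for w1 w2 by (rule coercive)
    show "\<bar>A z - A (p1, p2)\<bar> \<le> \<epsilon> \<and> \<bar>B z - B (p1, p2)\<bar> \<le> \<epsilon> \<and> \<bar>C z - C (p1, p2)\<bar> \<le> \<epsilon> \<and> \<bar>D z - D (p1, p2)\<bar> \<le> \<epsilon>"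
      if "z \<in> square (p1, p2) \<delta>" for z
      using near[OF that] by (meson less_imp_le)
  qed fact+
  with sub show ?thesis
    unfolding g1_def g2_def by blast
qed

section \<open>Descent on the grid\<close>

lemma round_toward:
  fixes h z c :: real
  assumes "h > 0"
  shows "\<exists>k::int. \<bar>of_int k * h - z\<bar> < h \<and> \<bar>of_int k * h - c\<bar> \<le> max \<bar>z - c\<bar> h"
proof (cases "z \<ge> c")
  case True
  define k where "k = \<lfloor>z / h\<rfloor>"
  have "of_int k \<le> z / h" "z / h < of_int k + 1" unfolding k_def by linarith+
  then have "of_int k * h \<le> z" "z < of_int k * h + h" using assms by (simp_all add: field_simps)
  with True show ?thesis by (intro exI[of _ k]) auto
next
  case False
  define k where "k = \<lceil>z / h\<rceil>"
  have "z / h \<le> of_int k" "of_int k < z / h + 1" unfolding k_def by linarith+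
  then have "z \<le> of_int k * h" "of_int k * h < z + h" using assms by (simp_all add: field_simps)
  with False show ?thesis by (intro exI[of _ k]) auto
qed

context quadratic_well
begin

definition step_ratio :: real where
  "step_ratio = (4 * M + 1) / \<mu>"

definition capture_radius :: real where
  "capture_radius = step_ratio + M * (step_ratio + 2)\<^sup>2"

lemma step_ratio_pos: "step_ratio > 0"
  using \<mu>_pos M_nonneg by (simp add: step_ratio_def)

lemma capture_radius_pos: "capture_radius > 0"
  using step_ratio_pos M_nonneg by (simp add: capture_radius_def add_pos_nonneg)

text \<open>
  With \<open>d = |q - p|\<^sub>1\<close>, moving from \<open>q\<close> towards \<open>p\<close> by \<open>step_ratio * H\<close> gains at least
  \<open>(4 M + 1) H d\<close> on the linear Taylor term, while an error of at most \<open>H\<close> per coordinate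
  (from rounding to the grid) costs at most \<open>2 M H d\<close>, and the quadratic remainder less than
  \<open>H d\<close> once \<open>d > capture_radius * H\<close>.\<close>
lemma descent_step:
  assumes q: "(q1, q2) \<in> square (p1, p2) \<delta>" and y: "(y1, y2) \<in> square (p1, p2) \<delta>"
    and "H > 0"
    and far: "\<bar>q1 - p1\<bar> + \<bar>q2 - p2\<bar> > capture_radius * H"
    and e1: "\<bar>y1 - (q1 - step_ratio * H / (\<bar>q1 - p1\<bar> + \<bar>q2 - p2\<bar>) * (q1 - p1))\<bar> \<le> H"
    and e2: "\<bar>y2 - (q2 - step_ratio * H / (\<bar>q1 - p1\<bar> + \<bar>q2 - p2\<bar>) * (q2 - p2))\<bar> \<le> H"
  shows "f (y1, y2) < f (q1, q2)" and "\<bar>y1 - q1\<bar> + \<bar>y2 - q2\<bar> \<le> (step_ratio + 2) * H"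
proof -
  define L where "L = step_ratio"
  define w1 where "w1 = q1 - p1"
  define w2 where "w2 = q2 - p2"
  define d where "d = \<bar>w1\<bar> + \<bar>w2\<bar>"
  define t where "t = L * H / d"
  have "L > 0" using step_ratio_pos by (simp add: L_def)
  have "M * (L + 2)\<^sup>2 * H \<ge> 0" "L * H > 0" using M_nonneg \<open>H > 0\<close> \<open>L > 0\<close> by simp_all
  moreover have "d > L * H + M * (L + 2)\<^sup>2 * H"
    using far unfolding d_def w1_def w2_def L_def capture_radius_def by (simp add: distrib_right)
  ultimately have "d > L * H" "d > M * (L + 2)\<^sup>2 * H" by linarith+
  then have "d > 0" using \<open>L > 0\<close> \<open>H > 0\<close> by (smt (verit) mult_pos_pos)
  have "t \<ge> 0" using \<open>L > 0\<close> \<open>H > 0\<close> \<open>d > 0\<close> by (simp add: t_def)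
  have td: "t * d = L * H" using \<open>d > 0\<close> by (simp add: t_def)
  define r1 where "r1 = y1 - (q1 - t * w1)"
  define r2 where "r2 = y2 - (q2 - t * w2)"
  have r: "\<bar>r1\<bar> \<le> H" "\<bar>r2\<bar> \<le> H"
    using e1 e2 unfolding r1_def r2_def t_def d_def w1_def w2_def L_def by simp_all
  have y_q: "y1 - q1 = - (t * w1) + r1" "y2 - q2 = - (t * w2) + r2"
    by (simp_all add: r1_def r2_def)
  have "\<bar>t * w1\<bar> + \<bar>t * w2\<bar> = t * d" using \<open>t \<ge> 0\<close> by (simp add: d_def abs_mult algebra_simps)
  then show step: "\<bar>y1 - q1\<bar> + \<bar>y2 - q2\<bar> \<le> (step_ratio + 2) * H"
    using y_q r td unfolding L_def by (simp add: algebra_simps)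
  have grad: "\<mu> * d\<^sup>2 \<le> g1 (q1, q2) * w1 + g2 (q1, q2) * w2"
    "\<bar>g1 (q1, q2)\<bar> \<le> M * d" "\<bar>g2 (q1, q2)\<bar> \<le> M * d"
    using gradient_coercive[OF q] gradient_bound[OF q] unfolding d_def w1_def w2_def by auto
  have "f (y1, y2) - f (q1, q2) \<le> g1 (q1, q2) * (y1 - q1) + g2 (q1, q2) * (y2 - q2) + M * (\<bar>y1 - q1\<bar> + \<bar>y2 - q2\<bar>)\<^sup>2"
    using taylor_bound[OF q y] by linarith
  moreover have "g1 (q1, q2) * (y1 - q1) + g2 (q1, q2) * (y2 - q2)
      = - t * (g1 (q1, q2) * w1 + g2 (q1, q2) * w2) + (g1 (q1, q2) * r1 + g2 (q1, q2) * r2)"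
    unfolding y_q by (simp add: algebra_simps)
  moreover have "- t * (g1 (q1, q2) * w1 + g2 (q1, q2) * w2) \<le> - 4 * (M * (H * d)) - H * d"
  proof -
    have "t * (\<mu> * d\<^sup>2) = (t * d) * \<mu> * d" by (simp add: power2_eq_square)
    also have "\<dots> = (4 * M + 1) * H * d" using td \<mu>_pos by (simp add: L_def step_ratio_def)
    finally have "4 * (M * (H * d)) + H * d = t * (\<mu> * d\<^sup>2)" by (simp add: algebra_simps)
    also have "\<dots> \<le> t * (g1 (q1, q2) * w1 + g2 (q1, q2) * w2)"
      using grad(1) \<open>t \<ge> 0\<close> by (rule mult_left_mono)
    finally show ?thesis by simp
  qed
  moreover have "g1 (q1, q2) * r1 + g2 (q1, q2) * r2 \<le> 2 * (M * (H * d))"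
  proof -
    have "\<bar>g1 (q1, q2) * r1\<bar> \<le> M * d * H" "\<bar>g2 (q1, q2) * r2\<bar> \<le> M * d * H"
      unfolding abs_mult using grad(2,3) r M_nonneg \<open>d > 0\<close> by (auto intro: mult_mono)
    then show ?thesis by (simp add: abs_le_iff algebra_simps)
  qed
  moreover have "M * (\<bar>y1 - q1\<bar> + \<bar>y2 - q2\<bar>)\<^sup>2 < H * d"
  proof -
    have "M * (\<bar>y1 - q1\<bar> + \<bar>y2 - q2\<bar>)\<^sup>2 \<le> M * ((L + 2) * H)\<^sup>2"
      using step M_nonneg by (intro mult_left_mono power_mono) (auto simp: L_def)
    also have "\<dots> = H * (M * (L + 2)\<^sup>2 * H)" by (simp add: power2_eq_square algebra_simps)
    also have "\<dots> < H * d"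
      using \<open>d > M * (L + 2)\<^sup>2 * H\<close> \<open>H > 0\<close> by (rule mult_strict_left_mono)
    finally show ?thesis .
  qed
  moreover have "M * (H * d) \<ge> 0" using M_nonneg \<open>H > 0\<close> \<open>d > 0\<close> by simp
  ultimately show "f (y1, y2) < f (q1, q2)" by linarith
qed

lemma descent_to_lattice:
  assumes "hx > 0" "hy > 0" "hx \<le> H" "hy \<le> H" "H < \<delta>"
    and q: "(q1, q2) \<in> square (p1, p2) \<delta>"
    and far: "\<bar>q1 - p1\<bar> + \<bar>q2 - p2\<bar> > capture_radius * H"
  shows "\<exists>k1 k2 :: int.
    \<bar>of_int k1 * hx - p1\<bar> \<le> max \<bar>q1 - p1\<bar> hx \<and> \<bar>of_int k2 * hy - p2\<bar> \<le> max \<bar>q2 - p2\<bar> hy \<and>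
    \<bar>of_int k1 * hx - q1\<bar> + \<bar>of_int k2 * hy - q2\<bar> \<le> (step_ratio + 2) * H \<and>
    f (of_int k1 * hx, of_int k2 * hy) < f (q1, q2)"
proof -
  define d where "d = \<bar>q1 - p1\<bar> + \<bar>q2 - p2\<bar>"
  define t where "t = step_ratio * H / d"
  have "H > 0" using assms by linarith
  have "step_ratio * H \<le> capture_radius * H"
    using M_nonneg \<open>H > 0\<close> by (intro mult_right_mono) (auto simp: capture_radius_def)
  then have "step_ratio * H < d" using far by (simp add: d_def)
  moreover have "step_ratio * H > 0" using step_ratio_pos \<open>H > 0\<close> by simp
  ultimately have "0 \<le> t" "t \<le> 1" by (simp_all add: t_def)
  define z1 where "z1 = q1 - t * (q1 - p1)"
  define z2 where "z2 = q2 - t * (q2 - p2)"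
  have "\<bar>z1 - p1\<bar> \<le> \<bar>q1 - p1\<bar>" "\<bar>z2 - p2\<bar> \<le> \<bar>q2 - p2\<bar>"
  proof -
    have "z1 - p1 = (1 - t) * (q1 - p1)" "z2 - p2 = (1 - t) * (q2 - p2)"
      by (simp_all add: z1_def z2_def algebra_simps)
    then show "\<bar>z1 - p1\<bar> \<le> \<bar>q1 - p1\<bar>" "\<bar>z2 - p2\<bar> \<le> \<bar>q2 - p2\<bar>"
      using \<open>0 \<le> t\<close> \<open>t \<le> 1\<close> by (simp_all add: abs_mult mult_left_le_one_le)
  qed
  obtain k1 :: int where k1: "\<bar>of_int k1 * hx - z1\<bar> < hx" "\<bar>of_int k1 * hx - p1\<bar> \<le> max \<bar>z1 - p1\<bar> hx"
    using round_toward[OF \<open>hx > 0\<close>] by blast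
  obtain k2 :: int where k2: "\<bar>of_int k2 * hy - z2\<bar> < hy" "\<bar>of_int k2 * hy - p2\<bar> \<le> max \<bar>z2 - p2\<bar> hy"
    using round_toward[OF \<open>hy > 0\<close>] by blast
  have closer: "\<bar>of_int k1 * hx - p1\<bar> \<le> max \<bar>q1 - p1\<bar> hx" "\<bar>of_int k2 * hy - p2\<bar> \<le> max \<bar>q2 - p2\<bar> hy"
    using k1(2) k2(2) max.mono[OF \<open>\<bar>z1 - p1\<bar> \<le> \<bar>q1 - p1\<bar>\<close> order_refl, of hx]
      max.mono[OF \<open>\<bar>z2 - p2\<bar> \<le> \<bar>q2 - p2\<bar>\<close> order_refl, of hy]
    by (blast intro: order_trans)+
  have "max \<bar>q1 - p1\<bar> hx < \<delta>" "max \<bar>q2 - p2\<bar> hy < \<delta>"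
    using q assms(3-5) by simp_all
  then have y: "(of_int k1 * hx, of_int k2 * hy) \<in> square (p1, p2) \<delta>"
    using le_less_trans[OF closer(1)] le_less_trans[OF closer(2)] by simp
  have "\<bar>of_int k1 * hx - (q1 - t * (q1 - p1))\<bar> \<le> H" "\<bar>of_int k2 * hy - (q2 - t * (q2 - p2))\<bar> \<le> H"
    using k1(1) k2(1) assms(3,4) unfolding z1_def z2_def by linarith+
  then have "f (of_int k1 * hx, of_int k2 * hy) < f (q1, q2)"
    and "\<bar>of_int k1 * hx - q1\<bar> + \<bar>of_int k2 * hy - q2\<bar> \<le> (step_ratio + 2) * H"
    using descent_step[OF q y \<open>H > 0\<close> far] unfolding t_def d_def by blast+
  with closer show ?thesis by blast
qed

end

lemma scaled_distance_le:
  fixes h H X \<kappa> u v :: real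
  assumes "h > 0" "H \<le> \<kappa> * h" "\<bar>u * h - v * h\<bar> \<le> X * H" "X \<ge> 0"
  shows "\<bar>u - v\<bar> \<le> X * \<kappa>"
proof -
  have "\<bar>u - v\<bar> * h = \<bar>u * h - v * h\<bar>"
    using \<open>h > 0\<close> by (simp add: abs_mult flip: left_diff_distrib)
  also have "\<dots> \<le> X * H" by fact
  also have "\<dots> \<le> X * (\<kappa> * h)" using assms(2,4) by (rule mult_left_mono)
  finally show ?thesis using \<open>h > 0\<close> by (simp add: mult.assoc)
qed

lemma grid_index_below:
  fixes h x :: real
  assumes "h > 0" "0 \<le> x" "x < real n * h"
  shows "\<exists>i\<le>n. real i * h \<le> x \<and> x < real i * h + h"
proof -
  define i where "i = nat \<lfloor>x / h\<rfloor>"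
  have "real i = of_int \<lfloor>x / h\<rfloor>"
    using assms by (simp add: i_def)
  then have "real i \<le> x / h" "x / h < real i + 1" by linarith+
  then have "real i * h \<le> x" "x < real i * h + h"
    using \<open>h > 0\<close> by (simp_all add: field_simps)
  moreover have "real i < real n"
    using \<open>real i * h \<le> x\<close> assms(1,3) by (metis le_less_trans mult_less_cancel_right_pos)
  ultimately show ?thesis by (intro exI[of _ i]) auto
qed

locale grid_well = quadratic_well +
  fixes a b r :: real and n :: nat
  assumes a_pos: "a > 0" and b_pos: "b > 0" and n_pos: "n \<ge> 1"
    and square_in_domain: "square (p1, p2) \<delta> \<subseteq> {0<..<a} \<times> {0<..<b}"
    and radius_large: "(2 * capture_radius + step_ratio + 2) * (max a b / min a b) \<le> r"
    and mesh_fine: "(r + capture_radius + 1) * (max a b / real n) < \<delta> / 2"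
begin

definition hx :: real where "hx = a / real n"
definition hy :: real where "hy = b / real n"
definition mesh :: real where "mesh = max a b / real n"

lemma mesh_pos: "hx > 0" "hy > 0" "mesh > 0"
  using a_pos b_pos n_pos by (simp_all add: hx_def hy_def mesh_def)

lemma mesh_le: "hx \<le> mesh" "hy \<le> mesh"
  using n_pos by (simp_all add: hx_def hy_def mesh_def divide_right_mono)

lemma mesh_le_ratio: "mesh \<le> (max a b / min a b) * hx" "mesh \<le> (max a b / min a b) * hy"
  using a_pos b_pos n_pos by (auto simp: hx_def hy_def mesh_def field_simps min_def max_def)

lemma radius_bounds: "(step_ratio + 2) * (max a b / min a b) \<le> r" "2 * capture_radius * (max a b / min a b) \<le> r"
proof -
  have k: "max a b / min a b > 0" using a_pos b_pos by simp
  have "(step_ratio + 2) * (max a b / min a b) > 0"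
    by (rule mult_pos_pos[OF _ k]) (use step_ratio_pos in linarith)
  moreover have "2 * capture_radius * (max a b / min a b) > 0"
    by (rule mult_pos_pos[OF _ k]) (use capture_radius_pos in linarith)
  moreover have "(2 * capture_radius + step_ratio + 2) * (max a b / min a b)
      = 2 * capture_radius * (max a b / min a b) + (step_ratio + 2) * (max a b / min a b)"
    by (simp only: distrib_right add.assoc)
  ultimately show "(step_ratio + 2) * (max a b / min a b) \<le> r" "2 * capture_radius * (max a b / min a b) \<le> r"
    using radius_large by linarith+
qed

lemma radius_pos: "r > 0"
  using radius_bounds(1) step_ratio_pos a_pos b_pos by (smt (verit) divide_pos_pos mult_pos_pos max_def min_def)

lemma mesh_small: "mesh < \<delta> / 2" "r * mesh + capture_radius * mesh < \<delta> / 2"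
proof -
  have "r * mesh > 0" "capture_radius * mesh > 0"
    using radius_pos capture_radius_pos mesh_pos(3) by simp_all
  moreover have "r * mesh + capture_radius * mesh + mesh < \<delta> / 2"
    using mesh_fine unfolding mesh_def[symmetric] by (simp add: distrib_right)
  ultimately show "mesh < \<delta> / 2" "r * mesh + capture_radius * mesh < \<delta> / 2"
    using mesh_pos(3) by linarith+
qed

lemma grid_vertex_eq: "grid_vertex a b n i j = (real i * hx, real j * hy)"
  by (simp add: grid_vertex_def hx_def hy_def)

lemma index_in_range:
  assumes "\<bar>of_int k * hx - p1\<bar> < \<delta>" "\<bar>of_int l * hy - p2\<bar> < \<delta>"
  shows "0 < k \<and> k < int n \<and> 0 < l \<and> l < int n"
proof -
  have "(of_int k * hx, of_int l * hy) \<in> square (p1, p2) \<delta>"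
    using assms by simp
  then have "(of_int k * hx, of_int l * hy) \<in> {0<..<a} \<times> {0<..<b}"
    using square_in_domain by blast
  then have "0 < of_int k * hx" "of_int k * hx < real n * hx" "0 < of_int l * hy" "of_int l * hy < real n * hy"
    using n_pos by (auto simp: hx_def hy_def)
  then show ?thesis
    using mesh_pos by (simp add: zero_less_mult_iff)
qed

lemma mem_grid_circle:
  assumes "l \<le> n" "m \<le> n" "\<bar>real l - real i\<bar> \<le> r" "\<bar>real m - real j\<bar> \<le> r"
  shows "grid_vertex a b n l m \<in> grid_circle a b n r i j"
  using assms unfolding grid_circle_def by (auto simp: of_int_max)

lemma grid_descent:
  assumes "i \<le> n" "j \<le> n" and q: "grid_vertex a b n i j \<in> square (p1, p2) \<delta>"
    and far: "\<bar>real i * hx - p1\<bar> + \<bar>real j * hy - p2\<bar> > capture_radius * mesh"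
  shows "\<exists>l m. l \<le> n \<and> m \<le> n \<and> grid_vertex a b n l m \<in> grid_circle a b n r i j \<and>
    \<bar>real l * hx - p1\<bar> \<le> max \<bar>real i * hx - p1\<bar> hx \<and> \<bar>real m * hy - p2\<bar> \<le> max \<bar>real j * hy - p2\<bar> hy \<and>
    f (grid_vertex a b n l m) < f (grid_vertex a b n i j)"
proof -
  have "mesh < \<delta>" using mesh_small(1) mesh_pos(3) by linarith
  obtain k1 k2 :: int where
    closer: "\<bar>of_int k1 * hx - p1\<bar> \<le> max \<bar>real i * hx - p1\<bar> hx" "\<bar>of_int k2 * hy - p2\<bar> \<le> max \<bar>real j * hy - p2\<bar> hy"
    and step: "\<bar>of_int k1 * hx - real i * hx\<bar> + \<bar>of_int k2 * hy - real j * hy\<bar> \<le> (step_ratio + 2) * mesh"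
    and less: "f (of_int k1 * hx, of_int k2 * hy) < f (real i * hx, real j * hy)"
    using descent_to_lattice[OF mesh_pos(1,2) mesh_le \<open>mesh < \<delta>\<close>] q far
    unfolding grid_vertex_eq by blast
  have "max \<bar>real i * hx - p1\<bar> hx < \<delta>" "max \<bar>real j * hy - p2\<bar> hy < \<delta>"
    using q mesh_le \<open>mesh < \<delta>\<close> by (simp_all add: grid_vertex_eq)
  then have "0 < k1 \<and> k1 < int n \<and> 0 < k2 \<and> k2 < int n"
    using le_less_trans[OF closer(1)] le_less_trans[OF closer(2)] by (intro index_in_range)
  then obtain l m where lm: "k1 = int l" "k2 = int m" "l \<le> n" "m \<le> n"
    by (metis nat_0_le nat_int_comparison(2) nat_less_le order.strict_implies_order)
  have "step_ratio + 2 \<ge> 0" using step_ratio_pos by simp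
  with radius_bounds(1) have "\<bar>real l - real i\<bar> \<le> r" "\<bar>real m - real j\<bar> \<le> r"
    using step scaled_distance_le[OF mesh_pos(1) mesh_le_ratio(1), of "real l" "real i" "step_ratio + 2"]
      scaled_distance_le[OF mesh_pos(2) mesh_le_ratio(2), of "real m" "real j" "step_ratio + 2"]
    unfolding lm by (smt (verit) abs_ge_zero of_int_of_nat_eq)+
  then have "grid_vertex a b n l m \<in> grid_circle a b n r i j"
    using lm by (intro mem_grid_circle)
  moreover have "\<bar>real l * hx - p1\<bar> \<le> max \<bar>real i * hx - p1\<bar> hx" "\<bar>real m * hy - p2\<bar> \<le> max \<bar>real j * hy - p2\<bar> hy"
    "f (real l * hx, real m * hy) < f (real i * hx, real j * hy)"
    using closer less unfolding lm by simp_all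
  ultimately show ?thesis
    using lm(3,4) unfolding grid_vertex_eq by blast
qed

end

context grid_well
begin

lemma circle_minimal_near_center:
  assumes "i \<le> n" "j \<le> n" "grid_vertex a b n i j \<in> square (p1, p2) \<delta>"
    and "minimal_in_circle f a b n r i j"
  shows "\<bar>real i * hx - p1\<bar> + \<bar>real j * hy - p2\<bar> \<le> capture_radius * mesh"
proof (rule ccontr)
  assume "\<not> ?thesis"
  then obtain l m where "grid_vertex a b n l m \<in> grid_circle a b n r i j"
    and "f (grid_vertex a b n l m) < f (grid_vertex a b n i j)"
    using grid_descent[OF assms(1-3)] by force
  with assms(4) show False
    unfolding minimal_in_circle_def by fastforce
qed

lemma near_center_circle_minimal_unique:
  assumes nondeg: "nondegenerate f a b n"
    and ij: "i \<le> n" "j \<le> n" "\<bar>real i * hx - p1\<bar> + \<bar>real j * hy - p2\<bar> \<le> capture_radius * mesh"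
      "minimal_in_circle f a b n r i j"
    and kl: "k \<le> n" "l \<le> n" "\<bar>real k * hx - p1\<bar> + \<bar>real l * hy - p2\<bar> \<le> capture_radius * mesh"
      "minimal_in_circle f a b n r k l"
  shows "(i, j) = (k, l)"
proof -
  have "\<bar>real i * hx - real k * hx\<bar> \<le> (2 * capture_radius) * mesh"
    "\<bar>real j * hy - real l * hy\<bar> \<le> (2 * capture_radius) * mesh"
    using ij(3) kl(3) by linarith+
  with radius_bounds(2) have "\<bar>real i - real k\<bar> \<le> r" "\<bar>real j - real l\<bar> \<le> r"
    using scaled_distance_le[OF mesh_pos(1) mesh_le_ratio(1), of "real i" "real k" "2 * capture_radius"]
      scaled_distance_le[OF mesh_pos(2) mesh_le_ratio(2), of "real j" "real l" "2 * capture_radius"]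
      capture_radius_pos by fastforce+
  then have "grid_vertex a b n k l \<in> grid_circle a b n r i j" "grid_vertex a b n i j \<in> grid_circle a b n r k l"
    using ij kl by (auto intro!: mem_grid_circle simp: abs_minus_commute)
  then have "f (grid_vertex a b n i j) = f (grid_vertex a b n k l)"
    using ij(4) kl(4) unfolding minimal_in_circle_def by (meson order_antisym)
  then have "grid_vertex a b n i j = grid_vertex a b n k l"
    using nondeg ij(1,2) kl(1,2) unfolding nondegenerate_def by blast
  then show ?thesis
    using mesh_pos(1,2) by (simp add: grid_vertex_eq)
qed

lemma grid_circle_cases:
  assumes "q \<in> grid_circle a b n r i j"
  obtains l m where "q = grid_vertex a b n l m" "l \<le> n" "m \<le> n"
    "\<bar>real l - real i\<bar> \<le> r" "\<bar>real m - real j\<bar> \<le> r"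
  using assms unfolding grid_circle_def by (auto simp: of_int_max)

lemma grid_vertex_near_center:
  "\<exists>i j. i \<le> n \<and> j \<le> n \<and> \<bar>real i * hx - p1\<bar> \<le> \<delta> / 2 \<and> \<bar>real j * hy - p2\<bar> \<le> \<delta> / 2"
proof -
  have "(p1, p2) \<in> square (p1, p2) \<delta>" using \<delta>_pos by simp
  then have "(p1, p2) \<in> {0<..<a} \<times> {0<..<b}" using square_in_domain by blast
  then have p: "0 < p1" "p1 < real n * hx" "0 < p2" "p2 < real n * hy"
    using n_pos by (auto simp: hx_def hy_def)
  obtain i where "i \<le> n" "real i * hx \<le> p1" "p1 < real i * hx + hx"
    using grid_index_below[OF mesh_pos(1) less_imp_le[OF p(1)] p(2)] by blast
  moreover obtain j where "j \<le> n" "real j * hy \<le> p2" "p2 < real j * hy + hy"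
    using grid_index_below[OF mesh_pos(2) less_imp_le[OF p(3)] p(4)] by blast
  moreover have "hx < \<delta> / 2" "hy < \<delta> / 2" using mesh_le mesh_small(1) by linarith+
  ultimately have "\<bar>real i * hx - p1\<bar> \<le> \<delta> / 2" "\<bar>real j * hy - p2\<bar> \<le> \<delta> / 2"
    unfolding abs_le_iff by linarith+
  with \<open>i \<le> n\<close> \<open>j \<le> n\<close> show ?thesis by blast
qed

lemma exists_circle_minimal:
  "\<exists>i j. i \<le> n \<and> j \<le> n \<and> grid_vertex a b n i j \<in> square (p1, p2) \<delta> \<and> minimal_in_circle f a b n r i j"
proof -
  define V where "V = {(i, j). i \<le> n \<and> j \<le> n \<and> \<bar>real i * hx - p1\<bar> \<le> \<delta> / 2 \<and> \<bar>real j * hy - p2\<bar> \<le> \<delta> / 2}"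
  define F where "F = (\<lambda>(i, j). f (grid_vertex a b n i j))"
  have "finite V"
    by (rule finite_subset[of _ "{..n} \<times> {..n}"]) (auto simp: V_def)
  have "hx < \<delta> / 2" "hy < \<delta> / 2" using mesh_le mesh_small(1) by linarith+
  obtain i0 j0 where "i0 \<le> n" "j0 \<le> n" "\<bar>real i0 * hx - p1\<bar> \<le> \<delta> / 2" "\<bar>real j0 * hy - p2\<bar> \<le> \<delta> / 2"
    using grid_vertex_near_center by blast
  then have "V \<noteq> {}" by (auto simp: V_def)
  obtain i j where "arg_min_on F V = (i, j)" by (cases "arg_min_on F V")
  with arg_min_if_finite[OF \<open>finite V\<close> \<open>V \<noteq> {}\<close>, of F]
  have ij: "(i, j) \<in> V" and min: "\<And>v. v \<in> V \<Longrightarrow> F (i, j) \<le> F v"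
    by (auto simp: not_less)
  then have ij_bounds: "i \<le> n" "j \<le> n" "\<bar>real i * hx - p1\<bar> \<le> \<delta> / 2" "\<bar>real j * hy - p2\<bar> \<le> \<delta> / 2"
    by (simp_all add: V_def)
  have in_square: "grid_vertex a b n i j \<in> square (p1, p2) \<delta>"
    using ij_bounds(3,4) \<delta>_pos by (simp add: grid_vertex_eq)
  have near: "\<bar>real i * hx - p1\<bar> + \<bar>real j * hy - p2\<bar> \<le> capture_radius * mesh"
  proof (rule ccontr)
    assume "\<not> ?thesis"
    then obtain l m where "l \<le> n" "m \<le> n"
      and closer: "\<bar>real l * hx - p1\<bar> \<le> max \<bar>real i * hx - p1\<bar> hx" "\<bar>real m * hy - p2\<bar> \<le> max \<bar>real j * hy - p2\<bar> hy"
      and less: "f (grid_vertex a b n l m) < f (grid_vertex a b n i j)"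
      using grid_descent[OF ij_bounds(1,2) in_square] by (auto simp: not_le)
    moreover have "max \<bar>real i * hx - p1\<bar> hx \<le> \<delta> / 2" "max \<bar>real j * hy - p2\<bar> hy \<le> \<delta> / 2"
      using ij_bounds(3,4) \<open>hx < \<delta> / 2\<close> \<open>hy < \<delta> / 2\<close> by simp_all
    ultimately have "(l, m) \<in> V" unfolding V_def by auto
    with min less show False unfolding F_def by fastforce
  qed
  have "minimal_in_circle f a b n r i j"
    unfolding minimal_in_circle_def
  proof
    fix q assume "q \<in> grid_circle a b n r i j"
    then obtain l m where q: "q = grid_vertex a b n l m" "l \<le> n" "m \<le> n"
      and lm: "\<bar>real l - real i\<bar> \<le> r" "\<bar>real m - real j\<bar> \<le> r"
      by (rule grid_circle_cases)
    have "\<bar>real l * hx - real i * hx\<bar> \<le> r * mesh" "\<bar>real m * hy - real j * hy\<bar> \<le> r * mesh"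
      using mult_mono[OF lm(1) mesh_le(1)] mult_mono[OF lm(2) mesh_le(2)] mesh_pos radius_pos
      by (simp_all add: abs_mult flip: left_diff_distrib)
    then have "\<bar>real l * hx - p1\<bar> \<le> \<delta> / 2" "\<bar>real m * hy - p2\<bar> \<le> \<delta> / 2"
      using near mesh_small(2) unfolding abs_le_iff by linarith+
    with q(2,3) have "(l, m) \<in> V" by (simp add: V_def)
    then show "f (grid_vertex a b n i j) \<le> f q"
      using min unfolding F_def q(1) by fastforce
  qed
  with ij_bounds(1,2) in_square show ?thesis by blast
qed

lemma unique_circle_minimal:
  assumes "nondegenerate f a b n"
  shows "\<exists>!ij. fst ij \<le> n \<and> snd ij \<le> n \<and> grid_vertex a b n (fst ij) (snd ij) \<in> square (p1, p2) \<delta> \<and>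
           minimal_in_circle f a b n r (fst ij) (snd ij)"
proof -
  obtain i j where ij: "i \<le> n" "j \<le> n" "grid_vertex a b n i j \<in> square (p1, p2) \<delta>" "minimal_in_circle f a b n r i j"
    using exists_circle_minimal by blast
  show ?thesis
  proof (rule ex1I[of _ "(i, j)"])
    fix kl :: "nat \<times> nat"
    assume "fst kl \<le> n \<and> snd kl \<le> n \<and> grid_vertex a b n (fst kl) (snd kl) \<in> square (p1, p2) \<delta> \<and>
      minimal_in_circle f a b n r (fst kl) (snd kl)"
    then show "kl = (i, j)"
      using near_center_circle_minimal_unique[OF assms] circle_minimal_near_center ij
      by (metis prod.collapse)
  qed (use ij in simp)
qed

end


lemma (in quadratic_well) eventually_unique_circle_minimal:
  assumes "a > 0" "b > 0" "square (p1, p2) \<delta> \<subseteq> {0<..<a} \<times> {0<..<b}"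
  shows "\<exists>U r. open U \<and> (p1, p2) \<in> U \<and> r > 0 \<and>
           (\<exists>N. \<forall>n\<ge>N. n \<ge> 1 \<and> nondegenerate f a b n \<longrightarrow>
              (\<exists>!ij. fst ij \<le> n \<and> snd ij \<le> n \<and>
                     grid_vertex a b n (fst ij) (snd ij) \<in> U \<and>
                     minimal_in_circle f a b n r (fst ij) (snd ij)))"
proof -
  define r where "r = (2 * capture_radius + step_ratio + 2) * (max a b / min a b)"
  define N where "N = nat \<lceil>2 * (r + capture_radius + 1) * max a b / \<delta>\<rceil> + 1"
  have "r > 0"
    using capture_radius_pos step_ratio_pos assms(1,2) by (simp add: r_def)
  have grid: "grid_well f g1 g2 p1 p2 \<delta> \<mu> M a b r n" if "n \<ge> N" "n \<ge> 1" for n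
  proof (rule grid_well.intro[OF quadratic_well_axioms], rule grid_well_axioms.intro)
    show "a > 0" "b > 0" "square (p1, p2) \<delta> \<subseteq> {0<..<a} \<times> {0<..<b}" by (fact assms)+
    show "n \<ge> 1" by fact
    show "(2 * capture_radius + step_ratio + 2) * (max a b / min a b) \<le> r" by (simp add: r_def)
    have "2 * (r + capture_radius + 1) * max a b / \<delta> < real N"
      unfolding N_def by linarith
    also have "\<dots> \<le> real n" using \<open>n \<ge> N\<close> by simp
    finally have "2 * (r + capture_radius + 1) * max a b < real n * \<delta>"
      using \<delta>_pos by (simp add: divide_less_eq)
    then show "(r + capture_radius + 1) * (max a b / real n) < \<delta> / 2"
      using \<open>n \<ge> 1\<close> by (simp add: field_simps)
  qed
  show ?thesis
  proof (intro exI[of _ "square (p1, p2) \<delta>"] exI[of _ r] conjI exI[of _ N] allI impI open_square)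
    show "(p1, p2) \<in> square (p1, p2) \<delta>" using \<delta>_pos by simp
    show "r > 0" by fact
    fix n assume "N \<le> n" "1 \<le> n \<and> nondegenerate f a b n"
    then show "\<exists>!ij. fst ij \<le> n \<and> snd ij \<le> n \<and> grid_vertex a b n (fst ij) (snd ij) \<in> square (p1, p2) \<delta> \<and>
        minimal_in_circle f a b n r (fst ij) (snd ij)"
      using grid_well.unique_circle_minimal[OF grid] by blast
  qed
qed

theorem theorem1:
  fixes a b :: real and f :: "real \<times> real \<Rightarrow> real" and p :: "real \<times> real"
  assumes "a > 0" and "b > 0"
    and "Ck_on 3 ({0<..<a} \<times> {0<..<b}) f"
    and "p \<in> {0<..<a} \<times> {0<..<b}"
    and "\<exists>e>0. \<forall>q\<in>{0..a} \<times> {0..b}. dist q p < e \<longrightarrow> f p \<le> f q"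
    and "hessian_pos_def f p"
  shows "\<exists>U r. open U \<and> p \<in> U \<and> r > 0 \<and>
           (\<exists>N. \<forall>n\<ge>N. n \<ge> 1 \<and> nondegenerate f a b n \<longrightarrow>
              (\<exists>!ij. fst ij \<le> n \<and> snd ij \<le> n \<and>
                     grid_vertex a b n (fst ij) (snd ij) \<in> U \<and>
                     minimal_in_circle f a b n r (fst ij) (snd ij)))"
proof -
  define S where "S = {0<..<a} \<times> {0<..<b}"
  obtain p1 p2 where p: "p = (p1, p2)" by (cases p)
  have "open S" by (simp add: S_def open_Times)
  have "Ck_on (Suc 2) S f" using assms(3) unfolding S_def numeral_3_eq_3 numeral_2_eq_2 .
  \<comment> \<open>only two of the three orders of differentiability are needed\<close>
  then have "Ck_on 2 S f" by (rule Ck_on_Suc_imp_Ck_on)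
  obtain e where "e > 0" and e: "\<forall>q\<in>{0..a} \<times> {0..b}. dist q p < e \<longrightarrow> f p \<le> f q"
    using assms(5) by blast
  have "\<forall>\<^sub>F q in nhds p. dist q p < e"
    using \<open>e > 0\<close> unfolding eventually_nhds_metric by blast
  moreover have "\<forall>\<^sub>F q in nhds p. q \<in> S"
    using \<open>open S\<close> assms(4) unfolding S_def by (rule eventually_nhds_in_open)
  ultimately have "\<forall>\<^sub>F q in nhds p. f p \<le> f q"
    by eventually_elim (use e in \<open>auto simp: S_def\<close>)
  then obtain \<delta> \<mu> M where sq: "square (p1, p2) \<delta> \<subseteq> S"
    and well: "quadratic_well f (partial1 f) (partial2 f) p1 p2 \<delta> \<mu> M"
    using C2_nondegenerate_local_min_quadratic_well[OF \<open>open S\<close> _ \<open>Ck_on 2 S f\<close>] assms(4,6)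
    unfolding p S_def by blast
  show ?thesis
    using quadratic_well.eventually_unique_circle_minimal[OF well assms(1,2) sq[unfolded S_def]]
    unfolding p .
qed

end
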